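(* Let $A=\begin{pmatrix}1&2\\0&1\end{pmatrix}$, $B=\begin{pmatrix}1&0\\2&1\end{pmatrix}$, and let $\langle A,B\rangle\le\mathrm{SL}_2(\mathbb{Z})$ be the subgroup they generate. There exists an absolute constant $C>0$ such that for every $R\ge1$ there is a free subgroup $F_R\le\langle A,B\rangle$ and a finite set $W=W_R=W^+\cup(W^+)^{-1}$, where $W^+$ is a free basis of $F_R$, satisfying: (1) $W=\sigma(W)=\tau(W)$; (2) $\max_{w\in W}\|w\|_\infty\le 18R^2$; (3) $|W|\ge CR^2$; (4) for every prime $p>36R^2$, the elements of $W$ are pairwise distinct modulo $p$.
   Context: $\|X\|_\infty$ denotes the maximum of the absolute values of the entries of the matrix $X$. For $g\in\mathrm{SL}_2(\mathbb{R})$, $\sigma(g)=(g^{-1})^T$ and $\tau(g)=JgJ$ with $J=\begin{pmatrix}0&1\\1&0\end{pmatrix}$; for a set $W$, $\sigma(W)=\{\sigma(w):w\in W\}$ and similarly for $\tau$. *)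

theory Defs
  imports "HOL-Analysis.Analysis" "HOL-Algebra.Generated_Groups"
begin

type_synonym mat2 = "int^2^2"

definition SL2Z :: "mat2 monoid" where
  "SL2Z = \<lparr>carrier = {M. det M = 1}, mult = (**), one = mat 1\<rparr>"

definition mA :: mat2 where
  "mA = vector [vector [1, 2], vector [0, 1]]"

definition mB :: mat2 where
  "mB = vector [vector [1, 0], vector [2, 1]]"

definition mJ :: mat2 where
  "mJ = vector [vector [0, 1], vector [1, 0]]"

definition sigma :: "mat2 \<Rightarrow> mat2" where
  "sigma g = transpose (inv\<^bsub>SL2Z\<^esub> g)"

definition tau :: "mat2 \<Rightarrow> mat2" where
  "tau g = mJ ** g ** mJ"

definition supnorm :: "mat2 \<Rightarrow> int" where
  "supnorm M = Max {\<bar>M $ i $ j\<bar> | i j. True}"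

text \<open>Words over S \<union> S^{-1}: letter (True,x) means x, (False,x) means x^{-1}.\<close>
definition word_eval :: "(bool \<times> mat2) list \<Rightarrow> mat2" where
  "word_eval ws = foldr (\<lambda>(b,x) acc. (if b then x else inv\<^bsub>SL2Z\<^esub> x) \<otimes>\<^bsub>SL2Z\<^esub> acc) ws \<one>\<^bsub>SL2Z\<^esub>"

definition reduced_word :: "(bool \<times> mat2) list \<Rightarrow> bool" where
  "reduced_word ws \<longleftrightarrow>
     (\<forall>i. Suc i < length ws \<longrightarrow> \<not> (snd (ws ! i) = snd (ws ! Suc i) \<and> fst (ws ! i) \<noteq> fst (ws ! Suc i)))"

definition free_basis :: "mat2 set \<Rightarrow> bool" where
  "free_basis S \<longleftrightarrow> S \<subseteq> carrier SL2Z \<and>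
     (\<forall>ws. ws \<noteq> [] \<and> snd ` set ws \<subseteq> S \<and> reduced_word ws \<longrightarrow> word_eval ws \<noteq> \<one>\<^bsub>SL2Z\<^esub>)"

end

theory Submission
  imports Defs
begin

text \<open>
  For a primitive vector \<open>v = (b, d)\<close> the transvection \<open>I + t v (d, -b)\<^sup>T\<close> fixes \<open>v\<close>;
  for \<open>t = 8, -8\<close> it lies in \<open>\<langle>A, B\<rangle>\<close>, which contains every matrix of SL(2,Z) that is
  congruent to \<open>I\<close> mod 2 and has upper left entry 1 mod 4 (Euclidean descent on the first
  row). Take these transvections for all primitive \<open>v\<close> with \<open>N/2 < max |b| |d| \<le> N\<close>, where
  \<open>N = \<lfloor>R\<rfloor>\<close>. They generate freely by ping-pong on \<open>\<int>\<^sup>2\<close>: \<open>g\<^sup>-\<^sup>1\<close> shortens a vector only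
  inside a narrow cone around the line of \<open>v\<close> and \<open>g\<close> lengthens every vector outside it, and
  for non-parallel \<open>v, v'\<close> of comparable length the cones are disjoint because
  \<open>|det(v, v')| \<ge> 1\<close>. The involutions \<open>\<sigma>\<close> and \<open>\<tau>\<close> act on the vectors by \<open>(b, d) \<mapsto> (d, -b)\<close>
  and \<open>(b, d) \<mapsto> (d, b)\<close>. All entries are at most \<open>9N\<^sup>2\<close>, so distinct elements stay distinct
  modulo primes \<open>p > 18N\<^sup>2\<close>. Finally, as the sum of \<open>1/k\<^sup>2\<close> over \<open>k \<ge> 2\<close> is below 2/3, at
  least \<open>N\<^sup>2/12\<close> coprime pairs lie in the shell.
\<close>

definition mat22 :: "int \<Rightarrow> int \<Rightarrow> int \<Rightarrow> int \<Rightarrow> mat2" where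
  "mat22 a b c d = vector [vector [a, b], vector [c, d]]"

definition vec2 :: "int \<Rightarrow> int \<Rightarrow> int^2" where
  "vec2 x y = vector [x, y]"

lemma mat22_nth [simp]:
  "mat22 a b c d $ 1 $ 1 = a" "mat22 a b c d $ 1 $ 2 = b"
  "mat22 a b c d $ 2 $ 1 = c" "mat22 a b c d $ 2 $ 2 = d"
  by (simp_all add: mat22_def)

lemma vec2_nth [simp]: "vec2 x y $ 1 = x" "vec2 x y $ 2 = y"
  by (simp_all add: vec2_def)

lemma mat2_eq_iff:
  "(M::mat2) = N \<longleftrightarrow> M$1$1 = N$1$1 \<and> M$1$2 = N$1$2 \<and> M$2$1 = N$2$1 \<and> M$2$2 = N$2$2"
  by (auto simp: vec_eq_iff forall_2)

lemma mat22_cases: obtains a b c d where "(M::mat2) = mat22 a b c d"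
  by (metis mat2_eq_iff mat22_nth)

lemma vec2_cases: obtains x y where "(z::int^2) = vec2 x y"
proof
  show "z = vec2 (z$1) (z$2)" by (simp add: vec_eq_iff forall_2)
qed

lemma mat22_eq_iff [simp]:
  "mat22 a b c d = mat22 a' b' c' d' \<longleftrightarrow> a = a' \<and> b = b' \<and> c = c' \<and> d = d'"
  by (simp add: mat2_eq_iff)

lemma mat22_mult [simp]:
  "mat22 a b c d ** mat22 e f g h = mat22 (a*e + b*g) (a*f + b*h) (c*e + d*g) (c*f + d*h)"
  by (simp add: mat2_eq_iff matrix_matrix_mult_def sum_2)

lemma mat22_mult_vec2 [simp]: "mat22 a b c d *v vec2 x y = vec2 (a*x + b*y) (c*x + d*y)"
  by (simp add: vec_eq_iff forall_2 matrix_vector_mult_def sum_2)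

lemma det_mat22 [simp]: "det (mat22 a b c d) = a*d - b*c"
  by (simp add: det_2)

lemma transpose_mat22 [simp]: "transpose (mat22 a b c d) = mat22 a c b d"
  by (simp add: mat2_eq_iff transpose_def)

lemma mat1_eq_mat22: "(mat 1 :: mat2) = mat22 1 0 0 1"
  by (simp add: mat2_eq_iff mat_def)

lemma mA_eq: "mA = mat22 1 2 0 1" by (simp add: mA_def mat22_def)
lemma mB_eq: "mB = mat22 1 0 2 1" by (simp add: mB_def mat22_def)
lemma mJ_eq: "mJ = mat22 0 1 1 0" by (simp add: mJ_def mat22_def)

lemma SL2Z_simps [simp]: "carrier SL2Z = {M. det M = 1}" "mult SL2Z = (**)" "one SL2Z = mat 1"
  by (simp_all add: SL2Z_def)

lemma group_SL2Z: "group SL2Z"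
proof (rule groupI)
  fix x :: mat2 assume "x \<in> carrier SL2Z"
  moreover obtain a b c d where x: "x = mat22 a b c d" by (rule mat22_cases)
  ultimately have "a*d - b*c = 1" by simp
  then show "\<exists>y\<in>carrier SL2Z. y \<otimes>\<^bsub>SL2Z\<^esub> x = \<one>\<^bsub>SL2Z\<^esub>"
    by (intro bexI[of _ "mat22 d (-b) (-c) a"]) (simp_all add: x mat1_eq_mat22 algebra_simps)
qed (simp_all add: det_mul matrix_mul_assoc)

interpretation SL: group SL2Z by (rule group_SL2Z)

lemma inv_mat22: "a*d - b*c = 1 \<Longrightarrow> inv\<^bsub>SL2Z\<^esub> (mat22 a b c d) = mat22 d (-b) (-c) a"
  by (rule SL.inv_equality) (simp_all add: mat1_eq_mat22 algebra_simps)

lemma inv_mult_vec_cancel: "g \<in> carrier SL2Z \<Longrightarrow> inv\<^bsub>SL2Z\<^esub> g *v (g *v z) = z"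
  by (metis SL.l_inv SL2Z_simps(2,3) matrix_vector_mul_assoc matrix_vector_mul_lid)

section \<open>The subgroup generated by $A$ and $B$\<close>

abbreviation gen_AB :: "mat2 set" where
  "gen_AB \<equiv> generate SL2Z {mA, mB}"

lemma subgroup_gen_AB: "subgroup gen_AB SL2Z"
  by (rule SL.generate_is_subgroup) (auto simp: mA_eq mB_eq)

lemma (in group) int_recurrence_in_subgroup:
  fixes f :: "int \<Rightarrow> 'a"
  assumes "subgroup H G" "s \<in> H" "f 0 = \<one>"
    and "\<And>k. f k \<in> carrier G" "\<And>k. f (k + 1) = f k \<otimes> s"
  shows "f k \<in> H"
proof (induction k rule: int_induct[where k = 0])
  case base
  show ?case using assms(1,3) by (simp add: subgroup.one_closed)
next
  case (step1 i)
  then show ?case using assms(1,2,5) by (simp add: subgroup.m_closed)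
next
  case (step2 i)
  have s: "s \<in> carrier G" using assms(1,2) subgroup.subset by blast
  have "f (i - 1) = f i \<otimes> inv s"
    using assms(5)[of "i - 1"] assms(4) s by (simp add: m_assoc)
  then show ?case using step2.IH assms(1,2) by (simp add: subgroup.m_closed subgroup.m_inv_closed)
qed

lemma upper_unitriangular_in_gen_AB: "mat22 1 (2*k) 0 1 \<in> gen_AB"
  by (rule SL.int_recurrence_in_subgroup[OF subgroup_gen_AB, of mA])
     (auto simp: mA_eq mat1_eq_mat22 generate.incl algebra_simps)

lemma lower_unitriangular_in_gen_AB: "mat22 1 0 (2*k) 1 \<in> gen_AB"
  by (rule SL.int_recurrence_in_subgroup[OF subgroup_gen_AB, of mB])
     (auto simp: mB_eq mat1_eq_mat22 generate.incl algebra_simps)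

lemma gen_AB_mult: "x \<in> gen_AB \<Longrightarrow> y \<in> gen_AB \<Longrightarrow> x ** y \<in> gen_AB"
  using subgroup.m_closed[OF subgroup_gen_AB] by simp

lemma exists_small_translate:
  fixes x y :: int
  assumes "y \<noteq> 0" "odd (x + y)"
  shows "\<exists>n. \<bar>x + 2*n*y\<bar> < \<bar>y\<bar>"
proof -
  define m where "m = 2 * \<bar>y\<bar>"
  define q where "q = x div m"
  define r where "r = x mod m"
  have m: "m > 0" using assms(1) by (simp add: m_def)
  have x: "x = m*q + r" and r: "0 \<le> r" "r < m"
    using m by (simp_all add: q_def r_def)
  have translate: "x + 2 * (- (k * sgn y)) * y = x - m * k" for k
    by (simp add: m_def abs_sgn mult_ac)
  have "r \<noteq> \<bar>y\<bar>"
  proof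
    assume "r = \<bar>y\<bar>"
    then have "x + y = 2 * (\<bar>y\<bar> * q) + (\<bar>y\<bar> + y)" by (simp add: x m_def)
    moreover have "even (\<bar>y\<bar> + y)" by (simp add: even_abs_add_iff)
    ultimately show False using assms(2) by simp
  qed
  then consider "r < \<bar>y\<bar>" | "\<bar>y\<bar> < r" by linarith
  then show ?thesis
  proof cases
    case 1
    then have "\<bar>x + 2 * (- (q * sgn y)) * y\<bar> < \<bar>y\<bar>"
      unfolding translate using r by (simp add: x)
    then show ?thesis ..
  next
    case 2
    have "x - m * (q + 1) = r - m" by (simp add: x algebra_simps)
    then have "\<bar>x + 2 * (- ((q + 1) * sgn y)) * y\<bar> < \<bar>y\<bar>"
      unfolding translate using 2 r m_def by simp
    then show ?thesis ..
  qed
qed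

lemma mat22_in_gen_AB:
  assumes "a*d - b*c = 1" "a mod 4 = 1" "even b" "even c"
  shows "mat22 a b c d \<in> gen_AB"
  using assms
proof (induction "nat (\<bar>a\<bar> + \<bar>b\<bar>)" arbitrary: a b c d rule: less_induct)
  case less
  have "odd a" using \<open>a mod 4 = 1\<close> by (metis dvd_mod_iff even_numeral odd_one)
  then have "\<bar>a\<bar> \<noteq> \<bar>b\<bar>" using \<open>even b\<close> by (metis even_abs_add_iff odd_add)
  then consider "b = 0" | "b \<noteq> 0" "\<bar>b\<bar> < \<bar>a\<bar>" | "\<bar>a\<bar> < \<bar>b\<bar>" by linarith
  then show ?case
  proof cases
    case 1
    then have "a = 1" "d = 1"
      using less.prems(1,2) zmult_eq_1_iff[of a d] by auto
    moreover obtain k where "c = 2*k" using \<open>even c\<close> by blast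
    ultimately show ?thesis using 1 lower_unitriangular_in_gen_AB by simp
  next
    case 2
    obtain n where n: "\<bar>a + 2*n*b\<bar> < \<bar>b\<bar>"
      using exists_small_translate[of b a] 2 \<open>odd a\<close> \<open>even b\<close> by auto
    obtain k where "b = 2*k" using \<open>even b\<close> by blast
    then have "a + 2*n*b = a + (n*k)*4" by simp
    then have "(a + 2*n*b) mod 4 = 1" using \<open>a mod 4 = 1\<close> by (metis mod_mult_self1)
    moreover have "nat (\<bar>a + 2*n*b\<bar> + \<bar>b\<bar>) < nat (\<bar>a\<bar> + \<bar>b\<bar>)"
      using n 2 by (subst nat_less_eq_zless) auto
    moreover have "(a + 2*n*b) * d - b * (c + 2*n*d) = 1" using less.prems(1) by (simp add: algebra_simps)
    ultimately have "mat22 (a + 2*n*b) b (c + 2*n*d) d \<in> gen_AB"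
      using less.prems(3,4) by (intro less.hyps) simp_all
    moreover have "mat22 a b c d = mat22 (a + 2*n*b) b (c + 2*n*d) d ** mat22 1 0 (2*(-n)) 1"
      by (simp add: algebra_simps)
    ultimately show ?thesis using gen_AB_mult lower_unitriangular_in_gen_AB by metis
  next
    case 3
    have "a \<noteq> 0" using \<open>odd a\<close> by auto
    then obtain n where n: "\<bar>b + 2*n*a\<bar> < \<bar>a\<bar>"
      using exists_small_translate[of a b] \<open>odd a\<close> \<open>even b\<close> by auto
    have "nat (\<bar>a\<bar> + \<bar>b + 2*n*a\<bar>) < nat (\<bar>a\<bar> + \<bar>b\<bar>)"
      using n 3 by (subst nat_less_eq_zless) auto
    moreover have "a * (d + 2*n*c) - (b + 2*n*a) * c = 1" using less.prems(1) by (simp add: algebra_simps)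
    ultimately have "mat22 a (b + 2*n*a) c (d + 2*n*c) \<in> gen_AB"
      using less.prems(2-4) by (intro less.hyps) simp_all
    moreover have "mat22 a b c d = mat22 a (b + 2*n*a) c (d + 2*n*c) ** mat22 1 (2*(-n)) 0 1"
      by (simp add: algebra_simps)
    ultimately show ?thesis using gen_AB_mult upper_unitriangular_in_gen_AB by metis
  qed
qed

section \<open>Ping-pong\<close>

definition letter_val :: "bool \<times> mat2 \<Rightarrow> mat2" where
  "letter_val l = (if fst l then snd l else inv\<^bsub>SL2Z\<^esub> (snd l))"

lemma word_eval_Nil: "word_eval [] = mat 1"
  by (simp add: word_eval_def)

lemma word_eval_Cons: "word_eval (l # ws) = letter_val l ** word_eval ws"
  by (cases l) (simp add: word_eval_def letter_val_def)

lemma reduced_word_Cons_Cons: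
  "reduced_word (l # l' # ws) \<longleftrightarrow>
     \<not> (snd l = snd l' \<and> fst l \<noteq> fst l') \<and> reduced_word (l' # ws)"
  unfolding reduced_word_def by (simp add: All_less_Suc2)

lemma letter_val_cancel:
  assumes "\<forall>x\<in>Wp. inv\<^bsub>SL2Z\<^esub> x \<notin> Wp" "Wp \<subseteq> carrier SL2Z" "snd l \<in> Wp" "snd l' \<in> Wp"
    and "letter_val l' = inv\<^bsub>SL2Z\<^esub> (letter_val l)"
  shows "snd l = snd l' \<and> fst l \<noteq> fst l'"
proof -
  have car: "snd l \<in> carrier SL2Z" "snd l' \<in> carrier SL2Z" using assms(2-4) by auto
  show ?thesis
  proof (cases "fst l"; cases "fst l'")
    assume "fst l" "fst l'"
    then show ?thesis using assms(1,3-5) by (simp add: letter_val_def)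
  next
    assume "fst l" "\<not> fst l'"
    then show ?thesis using assms(5) car by (simp add: letter_val_def inj_on_eq_iff[OF SL.inv_inj])
  qed (use assms car in \<open>auto simp: letter_val_def\<close>)
qed

lemma ping_pong_free_basis:
  fixes Wp :: "mat2 set" and D X :: "mat2 \<Rightarrow> (int^2) set"
  defines "W \<equiv> Wp \<union> (\<lambda>w. inv\<^bsub>SL2Z\<^esub> w) ` Wp"
  assumes carrier: "Wp \<subseteq> carrier SL2Z"
    and no_inverses: "\<forall>x\<in>Wp. inv\<^bsub>SL2Z\<^esub> x \<notin> Wp"
    and maps: "\<And>g z. g \<in> W \<Longrightarrow> z \<in> D g \<Longrightarrow> g *v z \<in> X g"
    and nested: "\<And>g h. g \<in> W \<Longrightarrow> h \<in> W \<Longrightarrow> h \<noteq> inv\<^bsub>SL2Z\<^esub> g \<Longrightarrow> X h \<subseteq> D g"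
    and base_point: "\<And>g. g \<in> W \<Longrightarrow> p \<in> D g \<and> p \<notin> X g"
  shows "free_basis Wp"
proof -
  have letter_W: "snd l \<in> Wp \<Longrightarrow> letter_val l \<in> W" for l
    by (auto simp: W_def letter_val_def)
  have "word_eval ws *v p \<in> X (letter_val (hd ws))"
    if "ws \<noteq> []" "snd ` set ws \<subseteq> Wp" "reduced_word ws" for ws
    using that
  proof (induction ws)
    case (Cons l ws)
    show ?case
    proof (cases ws)
      case Nil
      then show ?thesis
        using Cons.prems maps base_point letter_W by (simp add: word_eval_Cons word_eval_Nil)
    next
      case (Cons l' ws')
      have reduced: "reduced_word ws" "\<not> (snd l = snd l' \<and> fst l \<noteq> fst l')"
        using Cons.prems(3) by (simp_all add: Cons reduced_word_Cons_Cons)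
      have "word_eval ws *v p \<in> X (letter_val l')"
        using Cons.IH Cons.prems(2) reduced by (simp add: Cons)
      moreover have "letter_val l' \<noteq> inv\<^bsub>SL2Z\<^esub> (letter_val l)"
      proof
        assume "letter_val l' = inv\<^bsub>SL2Z\<^esub> (letter_val l)"
        then have "snd l = snd l' \<and> fst l \<noteq> fst l'"
          using letter_val_cancel[OF no_inverses carrier] Cons.prems(2) by (simp add: Cons)
        with reduced(2) show False by simp
      qed
      ultimately have "word_eval ws *v p \<in> D (letter_val l)"
        using nested[of "letter_val l" "letter_val l'"] letter_W[of l] letter_W[of l'] Cons.prems(2)
        by (auto simp: Cons)
      then have "letter_val l *v (word_eval ws *v p) \<in> X (letter_val l)"
        using maps letter_W Cons.prems(2) by simp
      then show ?thesis by (simp add: word_eval_Cons matrix_vector_mul_assoc)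
    qed
  qed simp
  then show ?thesis
    unfolding free_basis_def using carrier base_point letter_W
    by (metis SL2Z_simps(3) image_subset_iff list.set_sel(1) matrix_vector_mul_lid)
qed

section \<open>Transvections and norm cones\<close>

definition sqnorm :: "int^2 \<Rightarrow> int" where
  "sqnorm z = (z$1)^2 + (z$2)^2"

lemma sqnorm_vec2 [simp]: "sqnorm (vec2 x y) = x^2 + y^2"
  by (simp add: sqnorm_def)

text \<open>\<open>I + t v w\<^sup>T\<close> with \<open>v = (b, d)\<close>, \<open>w = (d, -b)\<close>: the unipotent matrix fixing \<open>v\<close>.\<close>

definition transvection :: "int \<Rightarrow> int \<Rightarrow> int \<Rightarrow> mat2" where
  "transvection b d t = mat22 (1 + t*b*d) (-(t*b^2)) (t*d^2) (1 - t*b*d)"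

lemma det_transvection [simp]: "det (transvection b d t) = 1"
  by (simp add: transvection_def algebra_simps power2_eq_square)

lemma transvection_in_carrier: "transvection b d t \<in> carrier SL2Z"
  by simp

lemma inv_transvection: "inv\<^bsub>SL2Z\<^esub> (transvection b d t) = transvection b d (-t)"
  using det_transvection[of b d t] unfolding transvection_def
  by (subst inv_mat22) (simp_all add: algebra_simps)

lemma sigma_transvection: "sigma (transvection b d t) = transvection d (-b) t"
  unfolding sigma_def inv_transvection by (simp add: transvection_def algebra_simps)

lemma tau_transvection: "tau (transvection b d t) = transvection d b (-t)"
  by (simp add: tau_def transvection_def mJ_eq algebra_simps)

lemma transvection_uminus: "transvection (-b) (-d) t = transvection b d t"
  by (simp add: transvection_def)

lemma transvection_in_gen_AB:
  assumes "4 dvd t"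
  shows "transvection b d t \<in> gen_AB"
proof -
  obtain k where t: "t = 4*k" using assms by blast
  have "(1 + t*b*d) mod 4 = 1"
    by (simp add: t mult.assoc)
  then show ?thesis
    using det_transvection[of b d t] unfolding transvection_def
    by (intro mat22_in_gen_AB) (simp_all add: t)
qed

lemma sqnorm_transvection:
  "sqnorm (transvection b d t *v vec2 x y) =
     x^2 + y^2 + 2*t*(d*x - b*y)*(b*x + d*y) + t^2*(d*x - b*y)^2*(b^2 + d^2)"
  by (simp add: transvection_def power2_eq_square algebra_simps)

lemma cone_of_sqnorm_le:
  fixes s e l a :: int
  assumes "s^2 * e^2 * a \<le> 2 * s * e * l" "\<bar>s\<bar> = 8"
  shows "4*a*\<bar>e\<bar> \<le> \<bar>l\<bar>"
proof (cases "e = 0")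
  case False
  have "2 * s * e * l \<le> 16*\<bar>e\<bar>*\<bar>l\<bar>"
    using assms(2) abs_ge_self[of "2 * s * e * l"] by (simp add: abs_mult)
  moreover have "s^2 * e^2 * a = 16*\<bar>e\<bar>*(4*a*\<bar>e\<bar>)"
    using assms(2) by (simp add: power2_eq_square flip: abs_mult_self_eq[of s])
  ultimately have "16*\<bar>e\<bar>*(4*a*\<bar>e\<bar>) \<le> 16*\<bar>e\<bar>*\<bar>l\<bar>" using assms(1) by linarith
  then show ?thesis using False by (simp add: mult_le_cancel_left mult.assoc)
qed simp

lemma cone_of_sqnorm_less:
  fixes s e l a :: int
  assumes "s^2 * e^2 * a < 2 * s * e * l" "\<bar>s\<bar> = 8"
  shows "4*a*\<bar>e\<bar> < \<bar>l\<bar>"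
proof -
  have "e \<noteq> 0" using assms(1) by auto
  have "2 * s * e * l \<le> 16*\<bar>e\<bar>*\<bar>l\<bar>"
    using assms(2) abs_ge_self[of "2 * s * e * l"] by (simp add: abs_mult)
  moreover have "s^2 * e^2 * a = 16*\<bar>e\<bar>*(4*a*\<bar>e\<bar>)"
    using assms(2) by (simp add: power2_eq_square flip: abs_mult_self_eq[of s])
  ultimately have "16*\<bar>e\<bar>*(4*a*\<bar>e\<bar>) < 16*\<bar>e\<bar>*\<bar>l\<bar>" using assms(1) by linarith
  then show ?thesis using \<open>e \<noteq> 0\<close> by (simp add: mult_less_cancel_left mult.assoc)
qed

lemma comparable_sq_sum_less:
  fixes a a' :: int
  assumes "0 < a" "0 < a'" "a \<le> 8*a'" "a' \<le> 8*a"
  shows "(a + a')^2 < 16*a*a'"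
proof -
  have "a*a \<le> 8*a'*a" "a'*a' \<le> 8*a*a'"
    using assms by (simp_all add: mult_right_mono)
  have "(a + a')^2 \<le> 11*a*a'"
  proof (cases "a \<le> a'")
    case True
    then have "a*a \<le> a*a'" using assms(1) by simp
    then show ?thesis using \<open>a'*a' \<le> 8*a*a'\<close> by (simp add: power2_eq_square algebra_simps)
  next
    case False
    then have "a'*a' \<le> a*a'" using assms(2) by simp
    then show ?thesis using \<open>a*a \<le> 8*a'*a\<close> by (simp add: power2_eq_square algebra_simps)
  qed
  moreover have "0 < a*a'" using assms(1,2) by simp
  ultimately show ?thesis by (simp add: mult.assoc)
qed

text \<open>For \<open>v = (b, d)\<close> and \<open>z = (x, y)\<close>, \<open>l = \<langle>v, z\<rangle>\<close> and \<open>e = det(z, v)\<close>; so the hypotheses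
  place \<open>z\<close> in narrow cones around the lines of \<open>v\<close> and \<open>v'\<close>.\<close>

lemma narrow_cones_product_bound:
  fixes x y b d b' d' :: int
  defines "a \<equiv> b^2 + d^2" and "a' \<equiv> b'^2 + d'^2"
    and "l \<equiv> b*x + d*y" and "e \<equiv> d*x - b*y" and "l' \<equiv> b'*x + d'*y" and "e' \<equiv> d'*x - b'*y"
  assumes independent: "b*d' - d*b' \<noteq> 0"
    and cones: "4*a*\<bar>e\<bar> \<le> \<bar>l\<bar>" "4*a'*\<bar>e'\<bar> \<le> \<bar>l'\<bar>"
  shows "4*a*a'*(x^2 + y^2) \<le> (a + a')*(\<bar>l\<bar>*\<bar>l'\<bar>)"
proof -
  define S where "S = x^2 + y^2"
  have "0 \<le> S" "0 \<le> a" "0 \<le> a'" by (simp_all add: S_def a_def a'_def)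
  have "1 \<le> \<bar>b*d' - d*b'\<bar>"
    using independent by (simp add: int_one_le_iff_zero_less)
  then have "S \<le> S * \<bar>b*d' - d*b'\<bar>"
    using \<open>0 \<le> S\<close> by (metis mult_left_mono mult.right_neutral)
  also have "\<dots> = \<bar>l*e' - l'*e\<bar>"
  proof -
    have "S * (b*d' - d*b') = l*e' - l'*e"
      unfolding S_def l_def e_def l'_def e'_def by algebra
    then show ?thesis using \<open>0 \<le> S\<close> by (metis abs_mult abs_of_nonneg)
  qed
  also have "\<dots> \<le> \<bar>l\<bar>*\<bar>e'\<bar> + \<bar>l'\<bar>*\<bar>e\<bar>"
    by (metis abs_mult abs_triangle_ineq4)
  finally have "4*a*a'*S \<le> 4*a*a'*(\<bar>l\<bar>*\<bar>e'\<bar> + \<bar>l'\<bar>*\<bar>e\<bar>)"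
    using \<open>0 \<le> a\<close> \<open>0 \<le> a'\<close> by (intro mult_left_mono) auto
  also have "\<dots> = (a*\<bar>l\<bar>)*(4*a'*\<bar>e'\<bar>) + (a'*\<bar>l'\<bar>)*(4*a*\<bar>e\<bar>)"
    by (simp add: algebra_simps)
  also have "\<dots> \<le> (a*\<bar>l\<bar>)*\<bar>l'\<bar> + (a'*\<bar>l'\<bar>)*\<bar>l\<bar>"
    using cones \<open>0 \<le> a\<close> \<open>0 \<le> a'\<close> by (intro add_mono mult_left_mono) auto
  finally show ?thesis by (simp add: S_def algebra_simps)
qed

lemma narrow_cones_disjoint:
  fixes x y b d b' d' :: int
  defines "a \<equiv> b^2 + d^2" and "a' \<equiv> b'^2 + d'^2"
    and "l \<equiv> b*x + d*y" and "e \<equiv> d*x - b*y" and "l' \<equiv> b'*x + d'*y" and "e' \<equiv> d'*x - b'*y"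
  assumes independent: "b*d' - d*b' \<noteq> 0" and comparable: "a \<le> 8*a'" "a' \<le> 8*a"
    and cones: "4*a*\<bar>e\<bar> \<le> \<bar>l\<bar>" "4*a'*\<bar>e'\<bar> < \<bar>l'\<bar>"
  shows False
proof -
  define S where "S = x^2 + y^2"
  have "0 < a" "0 < a'"
    using independent by (auto simp: a_def a'_def sum_power2_gt_zero_iff)
  have "S \<noteq> 0"
    using cones(2) \<open>0 < a'\<close> by (auto simp: S_def l'_def e'_def)
  then have "0 < S" by (simp add: S_def sum_power2_gt_zero_iff)
  have "4*a*a'*S \<le> (a + a')*(\<bar>l\<bar>*\<bar>l'\<bar>)"
    using independent cones(1) less_imp_le[OF cones(2)]
    unfolding S_def a_def a'_def l_def e_def l'_def e'_def by (rule narrow_cones_product_bound)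
  then have "(4*a*a'*S)^2 \<le> ((a + a')*(\<bar>l\<bar>*\<bar>l'\<bar>))^2"
    using \<open>0 < a\<close> \<open>0 < a'\<close> \<open>0 < S\<close> by (intro power_mono) simp_all
  also have "\<dots> = (a + a')^2 * (l^2 * l'^2)"
    by (simp add: power_mult_distrib)
  also have "\<dots> \<le> (a + a')^2 * ((S*a) * (S*a'))"
  proof -
    have "l^2 + e^2 = S*a" "l'^2 + e'^2 = S*a'"
      by (simp_all add: S_def a_def a'_def l_def e_def l'_def e'_def power2_eq_square algebra_simps)
    then have "l^2 \<le> S*a" "l'^2 \<le> S*a'"
      by (metis le_add_same_cancel1 zero_le_power2)+
    then show ?thesis
      using \<open>0 < a\<close> \<open>0 < a'\<close> \<open>0 < S\<close> by (intro mult_left_mono mult_mono) auto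
  qed
  finally have "(16*a*a') * (a*a'*S^2) \<le> (a + a')^2 * (a*a'*S^2)"
    by (simp add: algebra_simps power2_eq_square)
  then have "16*a*a' \<le> (a + a')^2"
    using \<open>0 < a\<close> \<open>0 < a'\<close> \<open>0 < S\<close> by (simp add: mult_le_cancel_right)
  then show False
    using comparable_sq_sum_less[OF \<open>0 < a\<close> \<open>0 < a'\<close> comparable] by simp
qed

definition growing :: "mat2 \<Rightarrow> (int^2) set" where
  "growing g = {z. sqnorm z < sqnorm (g *v z)}"

definition shrinking :: "mat2 \<Rightarrow> (int^2) set" where
  "shrinking g = {z. sqnorm (g *v z) < sqnorm z}"

lemma growing_imp_shrinking_inv:
  "g \<in> carrier SL2Z \<Longrightarrow> z \<in> growing g \<Longrightarrow> g *v z \<in> shrinking (inv\<^bsub>SL2Z\<^esub> g)"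
  by (simp add: growing_def shrinking_def inv_mult_vec_cancel)

lemma shrinking_inv_transvection_subset:
  "shrinking (inv\<^bsub>SL2Z\<^esub> (transvection b d t)) \<subseteq> growing (transvection b d t)"
proof
  fix z :: "int^2"
  obtain x y where z: "z = vec2 x y" by (rule vec2_cases)
  assume "z \<in> shrinking (inv\<^bsub>SL2Z\<^esub> (transvection b d t))"
  then have "t^2 * (d*x - b*y)^2 * (b^2 + d^2) < 2 * t * (d*x - b*y) * (b*x + d*y)"
    by (simp add: z shrinking_def inv_transvection sqnorm_transvection)
  moreover have "0 \<le> t^2 * (d*x - b*y)^2 * (b^2 + d^2)" by simp
  ultimately have "0 < 2 * t * (d*x - b*y) * (b*x + d*y) + t^2 * (d*x - b*y)^2 * (b^2 + d^2)"
    by linarith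
  then show "z \<in> growing (transvection b d t)"
    by (simp add: z growing_def sqnorm_transvection)
qed

lemma shrinking_inv_transvection_subset_growing:
  assumes "\<bar>t\<bar> = 8" "\<bar>t'\<bar> = 8" "b*d' - d*b' \<noteq> 0"
    and "b^2 + d^2 \<le> 8*(b'^2 + d'^2)" "b'^2 + d'^2 \<le> 8*(b^2 + d^2)"
  shows "shrinking (inv\<^bsub>SL2Z\<^esub> (transvection b' d' t')) \<subseteq> growing (transvection b d t)"
proof
  fix z :: "int^2"
  obtain x y where z: "z = vec2 x y" by (rule vec2_cases)
  assume "z \<in> shrinking (inv\<^bsub>SL2Z\<^esub> (transvection b' d' t'))"
  then have "t'^2 * (d'*x - b'*y)^2 * (b'^2 + d'^2) < 2 * t' * (d'*x - b'*y) * (b'*x + d'*y)"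
    by (simp add: z shrinking_def inv_transvection sqnorm_transvection)
  then have narrow': "4*(b'^2 + d'^2)*\<bar>d'*x - b'*y\<bar> < \<bar>b'*x + d'*y\<bar>"
    by (rule cone_of_sqnorm_less) (rule assms(2))
  show "z \<in> growing (transvection b d t)"
  proof (rule ccontr)
    assume "z \<notin> growing (transvection b d t)"
    then have "(-t)^2 * (d*x - b*y)^2 * (b^2 + d^2) \<le> 2 * (-t) * (d*x - b*y) * (b*x + d*y)"
      by (simp add: z growing_def sqnorm_transvection)
    then have "4*(b^2 + d^2)*\<bar>d*x - b*y\<bar> \<le> \<bar>b*x + d*y\<bar>"
      by (rule cone_of_sqnorm_le) (simp add: assms(1))
    then show False
      using narrow_cones_disjoint[OF assms(3-5)] narrow' by blast
  qed
qed

lemma base_point_growing: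
  assumes "b \<noteq> 0" "d \<noteq> 0" "2 \<le> \<bar>t\<bar>"
  shows "vec2 1 0 \<in> growing (transvection b d t)"
proof -
  define x where "x = t*b*d"
  have "1 \<le> \<bar>b*d\<bar>" using assms(1,2) by (simp add: int_one_le_iff_zero_less)
  then have "2 * 1 \<le> \<bar>t\<bar> * \<bar>b*d\<bar>" using assms(3) by (intro mult_mono) simp_all
  then have "2 \<le> \<bar>x\<bar>" by (simp add: x_def abs_mult mult.assoc)
  then have "0 \<le> x * (x + 2)" by (cases "0 \<le> x") (simp_all add: mult_nonpos_nonpos)
  moreover have "0 < t^2 * d^2 * d^2" using assms by simp
  ultimately show ?thesis
    by (simp add: x_def growing_def sqnorm_transvection power2_eq_square algebra_simps)
qed

section \<open>The generating set\<close>

text \<open>The condition \<open>N < 2 max |b| |d|\<close> keeps all squared lengths within a factor 8 of each other.\<close>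

definition primitive_shell :: "nat \<Rightarrow> (int \<times> int) set" where
  "primitive_shell N = {(b, d). coprime b d \<and> b \<noteq> 0 \<and> d \<noteq> 0 \<and>
     \<bar>b\<bar> \<le> int N \<and> \<bar>d\<bar> \<le> int N \<and> int N < 2 * max \<bar>b\<bar> \<bar>d\<bar>}"

definition shell_basis :: "nat \<Rightarrow> mat2 set" where
  "shell_basis N = (\<lambda>(b, d). transvection b d 8) ` primitive_shell N"

definition shell_generators :: "nat \<Rightarrow> mat2 set" where
  "shell_generators N = (\<lambda>((b, d), t). transvection b d t) ` (primitive_shell N \<times> {8, -8})"

lemma primitive_shell_swap: "(b, d) \<in> primitive_shell N \<Longrightarrow> (d, b) \<in> primitive_shell N"
  by (auto simp: primitive_shell_def coprime_commute max.commute)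

lemma primitive_shell_rotate: "(b, d) \<in> primitive_shell N \<Longrightarrow> (d, -b) \<in> primitive_shell N"
  by (auto simp: primitive_shell_def coprime_commute max.commute)

lemma finite_primitive_shell: "finite (primitive_shell N)"
proof (rule finite_subset)
  show "primitive_shell N \<subseteq> {-int N..int N} \<times> {-int N..int N}"
    by (auto simp: primitive_shell_def)
qed simp

lemma primitive_shell_comparable:
  assumes "(b, d) \<in> primitive_shell N" "(b', d') \<in> primitive_shell N"
  shows "b^2 + d^2 \<le> 8*(b'^2 + d'^2)"
proof -
  have "\<bar>b\<bar> \<le> int N" "\<bar>d\<bar> \<le> int N" using assms(1) by (auto simp: primitive_shell_def)
  then have "b^2 + d^2 \<le> 2*(int N)^2"
    using abs_le_square_iff[of b "int N"] abs_le_square_iff[of d "int N"] by auto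
  define m where "m = max \<bar>b'\<bar> \<bar>d'\<bar>"
  have "int N + 1 \<le> 2*m" using assms(2) by (simp add: primitive_shell_def m_def)
  then have "(int N + 1)^2 \<le> (2*m)^2" by (intro power_mono) auto
  moreover have "m^2 \<le> b'^2 + d'^2" by (cases "\<bar>b'\<bar> \<le> \<bar>d'\<bar>") (auto simp: m_def max_def)
  ultimately show ?thesis
    using \<open>b^2 + d^2 \<le> 2*(int N)^2\<close> by (simp add: power2_eq_square algebra_simps)
qed

lemma primitive_shell_parallel:
  assumes "(b, d) \<in> primitive_shell N" "(b', d') \<in> primitive_shell N" "b*d' - d*b' = 0"
  shows "transvection b' d' t = transvection b d t"
proof -
  have coprime: "coprime b d" "coprime b' d'" and "b \<noteq> 0"
    using assms(1,2) by (simp_all add: primitive_shell_def)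
  have eq: "b*d' = d*b'" using assms(3) by simp
  then have "b dvd d*b'" "b' dvd b*d'" by (metis dvd_triv_left, metis dvd_triv_right)
  then have "b dvd b'" "b' dvd b"
    using coprime by (simp_all add: coprime_dvd_mult_right_iff coprime_dvd_mult_left_iff)
  then have "b' = b \<or> b' = -b"
    using zdvd_antisym_abs[of b b'] by auto
  then show ?thesis
  proof
    assume "b' = -b"
    then have "b * d' = b * (-d)" using eq by (simp add: mult.commute)
    then have "d' = -d" using mult_left_cancel[OF \<open>b \<noteq> 0\<close>] by blast
    with \<open>b' = -b\<close> show ?thesis by (simp add: transvection_uminus)
  qed (use eq \<open>b \<noteq> 0\<close> in simp)
qed

lemma shell_generatorsE:
  assumes "g \<in> shell_generators N"
  obtains b d t where "(b, d) \<in> primitive_shell N" "t = 8 \<or> t = -8" "g = transvection b d t"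
  using assms by (auto simp: shell_generators_def)

lemma transvection_in_shell_generators:
  "(b, d) \<in> primitive_shell N \<Longrightarrow> t = 8 \<or> t = -8 \<Longrightarrow> transvection b d t \<in> shell_generators N"
  unfolding shell_generators_def by (rule image_eqI[where x = "((b, d), t)"]) auto

lemma shell_generators_eq:
  "shell_generators N = shell_basis N \<union> (\<lambda>w. inv\<^bsub>SL2Z\<^esub> w) ` shell_basis N"
proof -
  have "primitive_shell N \<times> {8, -8 :: int} =
      (\<lambda>v. (v, 8)) ` primitive_shell N \<union> (\<lambda>v. (v, -8)) ` primitive_shell N"
    by auto
  then show ?thesis
    by (simp add: shell_generators_def shell_basis_def image_Un image_image inv_transvection
        case_prod_beta)
qed

lemma shell_generators_nested:
  assumes "g \<in> shell_generators N" "h \<in> shell_generators N" "h \<noteq> inv\<^bsub>SL2Z\<^esub> g"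
  shows "shrinking (inv\<^bsub>SL2Z\<^esub> h) \<subseteq> growing g"
proof -
  obtain b d t where g: "(b, d) \<in> primitive_shell N" "t = 8 \<or> t = -8" "g = transvection b d t"
    using assms(1) by (rule shell_generatorsE)
  obtain b' d' t' where h: "(b', d') \<in> primitive_shell N" "t' = 8 \<or> t' = -8" "h = transvection b' d' t'"
    using assms(2) by (rule shell_generatorsE)
  show ?thesis
  proof (cases "b*d' - d*b' = 0")
    case True
    then have "h = transvection b d t'"
      using primitive_shell_parallel[OF g(1) h(1)] h(3) by simp
    then have "h = g"
      using assms(3) g(2,3) h(2) by (auto simp: inv_transvection)
    then show ?thesis
      using g(3) shrinking_inv_transvection_subset by simp
  next
    case False
    have "\<bar>t\<bar> = 8" "\<bar>t'\<bar> = 8" using g(2) h(2) by auto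
    then show ?thesis
      unfolding g(3) h(3)
      using False primitive_shell_comparable[OF g(1) h(1)] primitive_shell_comparable[OF h(1) g(1)]
      by (rule shrinking_inv_transvection_subset_growing)
  qed
qed

lemma free_basis_shell_basis: "free_basis (shell_basis N)"
proof (rule ping_pong_free_basis[where D = growing and X = "\<lambda>g. shrinking (inv\<^bsub>SL2Z\<^esub> g)"
      and p = "vec2 1 0"], unfold shell_generators_eq[symmetric])
  show "shell_basis N \<subseteq> carrier SL2Z"
    by (auto simp: shell_basis_def transvection_in_carrier)
  show "\<forall>x\<in>shell_basis N. inv\<^bsub>SL2Z\<^esub> x \<notin> shell_basis N"
  proof (intro ballI notI)
    fix x assume "x \<in> shell_basis N" "inv\<^bsub>SL2Z\<^esub> x \<in> shell_basis N"
    then obtain b d b' d' where "(b, d) \<in> primitive_shell N"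
      and eq: "transvection b d (-8) = transvection b' d' 8"
      by (auto simp: shell_basis_def inv_transvection)
    moreover have "b^2 + b'^2 = 0"
      using eq by (simp add: transvection_def)
    ultimately show False by (simp add: primitive_shell_def)
  qed
  fix g assume g: "g \<in> shell_generators N"
  then obtain b d t where bdt: "(b, d) \<in> primitive_shell N" "t = 8 \<or> t = -8" "g = transvection b d t"
    by (rule shell_generatorsE)
  show "z \<in> growing g \<Longrightarrow> g *v z \<in> shrinking (inv\<^bsub>SL2Z\<^esub> g)" for z
    using bdt(3) transvection_in_carrier growing_imp_shrinking_inv by blast
  show "h \<in> shell_generators N \<Longrightarrow> h \<noteq> inv\<^bsub>SL2Z\<^esub> g \<Longrightarrow>
      shrinking (inv\<^bsub>SL2Z\<^esub> h) \<subseteq> growing g" for h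
    using g shell_generators_nested by blast
  have "b \<noteq> 0" "d \<noteq> 0" using bdt(1) by (simp_all add: primitive_shell_def)
  then have "vec2 1 0 \<in> growing (transvection b d t)" "vec2 1 0 \<in> growing (transvection b d (-t))"
    using bdt(2) by (auto intro: base_point_growing)
  then show "vec2 1 0 \<in> growing g \<and> vec2 1 0 \<notin> shrinking (inv\<^bsub>SL2Z\<^esub> g)"
    by (auto simp: bdt(3) inv_transvection growing_def shrinking_def)
qed

lemma finite_shell_generators: "finite (shell_generators N)"
  by (simp add: shell_generators_def finite_primitive_shell)

lemma subgroup_generate_shell_basis: "subgroup (generate SL2Z (shell_basis N)) SL2Z"
  by (rule SL.generate_is_subgroup) (auto simp: shell_basis_def)

lemma generate_shell_basis_subset: "generate SL2Z (shell_basis N) \<subseteq> gen_AB"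
  by (rule SL.generate_subgroup_incl[OF _ subgroup_gen_AB])
    (auto simp: shell_basis_def transvection_in_gen_AB)

lemma image_eq_of_involution:
  "(\<And>x. x \<in> A \<Longrightarrow> f x \<in> A) \<Longrightarrow> (\<And>x. x \<in> A \<Longrightarrow> f (f x) = x) \<Longrightarrow> f ` A = A"
  by (metis image_subsetI image_eqI subsetI subset_antisym)

lemma sigma_shell_generators: "sigma ` shell_generators N = shell_generators N"
proof (rule image_eq_of_involution)
  fix g assume "g \<in> shell_generators N"
  then obtain b d t where "(b, d) \<in> primitive_shell N" "t = 8 \<or> t = -8" "g = transvection b d t"
    by (rule shell_generatorsE)
  then show "sigma g \<in> shell_generators N" "sigma (sigma g) = g"
    by (simp_all add: sigma_transvection transvection_uminus primitive_shell_rotate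
        transvection_in_shell_generators)
qed

lemma tau_shell_generators: "tau ` shell_generators N = shell_generators N"
proof (rule image_eq_of_involution)
  fix g assume "g \<in> shell_generators N"
  then obtain b d t where "(b, d) \<in> primitive_shell N" "t = 8 \<or> t = -8" "g = transvection b d t"
    by (rule shell_generatorsE)
  then show "tau g \<in> shell_generators N" "tau (tau g) = g"
    by (auto simp: tau_transvection primitive_shell_swap transvection_in_shell_generators)
qed

section \<open>Bounds on the entries\<close>

lemma supnorm_le_iff: "supnorm M \<le> K \<longleftrightarrow> (\<forall>i j. \<bar>M$i$j\<bar> \<le> K)"
proof -
  have "{\<bar>M$i$j\<bar> | i j. True} = (\<lambda>(i, j). \<bar>M$i$j\<bar>) ` UNIV" by auto
  then show ?thesis by (auto simp: supnorm_def)
qed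

lemma supnorm_transvection_le:
  assumes "\<bar>b\<bar> \<le> n" "\<bar>d\<bar> \<le> n"
  shows "supnorm (transvection b d t) \<le> 1 + \<bar>t\<bar> * n^2"
proof -
  have "b^2 \<le> n^2" "d^2 \<le> n^2"
    using power_mono[OF assms(1) abs_ge_zero, of 2] power_mono[OF assms(2) abs_ge_zero, of 2] by simp_all
  moreover have "\<bar>b*d\<bar> \<le> n^2"
    using assms by (simp add: abs_mult power2_eq_square mult_mono)
  ultimately have "\<bar>t*b*d\<bar> \<le> \<bar>t\<bar> * n^2" "\<bar>t*b^2\<bar> \<le> \<bar>t\<bar> * n^2" "\<bar>t*d^2\<bar> \<le> \<bar>t\<bar> * n^2"
    by (simp_all add: abs_mult mult.assoc mult_left_mono)
  then show ?thesis
    by (auto simp: supnorm_le_iff transvection_def forall_2)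
qed

lemma supnorm_shell_generators_le:
  assumes "N \<ge> 1" "w \<in> shell_generators N"
  shows "supnorm w \<le> 9 * (int N)^2"
proof -
  obtain b d t where "(b, d) \<in> primitive_shell N" "t = 8 \<or> t = -8" "w = transvection b d t"
    using assms(2) by (rule shell_generatorsE)
  then have "supnorm w \<le> 1 + 8 * (int N)^2"
    using supnorm_transvection_le[of b "int N" d t] by (auto simp: primitive_shell_def)
  moreover have "1 \<le> (int N)^2" using assms(1) by simp
  ultimately show ?thesis by simp
qed

lemma entries_distinct_mod:
  fixes p :: int
  assumes "supnorm M \<le> K" "supnorm M' \<le> K" "M \<noteq> M'" "2*K < p"
  shows "\<exists>i j. M$i$j mod p \<noteq> M'$i$j mod p"
proof -
  obtain i j where ne: "M$i$j \<noteq> M'$i$j"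
    using assms(3) by (metis vec_eq_iff)
  have "\<bar>M$i$j\<bar> \<le> K" "\<bar>M'$i$j\<bar> \<le> K"
    using assms(1,2) by (simp_all add: supnorm_le_iff)
  then have "\<bar>M$i$j - M'$i$j\<bar> < p"
    using assms(4) by linarith
  then have "M$i$j mod p \<noteq> M'$i$j mod p"
    using ne dvd_imp_le_int[of "M$i$j - M'$i$j" p] by (auto simp: mod_eq_dvd_iff)
  then show ?thesis by blast
qed

lemma shell_generators_distinct_mod:
  fixes p :: nat
  assumes "N \<ge> 1" "18 * (real N)^2 < real p"
    and "w \<in> shell_generators N" "w' \<in> shell_generators N" "w \<noteq> w'"
  shows "\<exists>i j. w $ i $ j mod int p \<noteq> w' $ i $ j mod int p"
proof (rule entries_distinct_mod[OF supnorm_shell_generators_le[OF assms(1,3)]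
      supnorm_shell_generators_le[OF assms(1,4)] assms(5)])
  have "real_of_int (2 * (9 * (int N)^2)) < real_of_int (int p)"
    using assms(2) by simp
  then show "2 * (9 * (int N)^2) < int p"
    by (simp only: of_int_less_iff)
qed

section \<open>Counting coprime pairs\<close>

lemma sum_inverse_squares_le:
  "n \<ge> 1 \<Longrightarrow> (\<Sum>k = 2..n. 1 / (real k)^2) \<le> 2/3 - 2 / (2 * real n + 1)"
proof (induction n rule: nat_induct_at_least)
  case (Suc n)
  have "1 / (real n + 1)^2 = 4 / (4 * (real n + 1)^2)"
    by simp
  also have "\<dots> \<le> 4 / ((2 * real n + 1) * (2 * real n + 3))"
    by (rule frac_le) (auto simp: power2_eq_square algebra_simps intro!: add_pos_nonneg)
  also have "\<dots> = 2 / (2 * real n + 1) - 2 / (2 * real (Suc n) + 1)"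
    by (simp add: field_simps)
  finally show ?case
    using Suc by (simp add: atLeastAtMostSuc_conv add.commute)
qed simp

lemma card_multiples_atLeastAtMost:
  assumes "0 < k"
  shows "card {x \<in> {1..N}. k dvd x} = N div k"
proof -
  have "{x \<in> {1..N}. k dvd x} = (\<lambda>j. k*j) ` {1..N div k}"
    using assms by (fastforce simp: less_eq_div_iff_mult_less_eq mult.commute)
  moreover have "inj_on (\<lambda>j. k*j) {1..N div k}"
    using assms by (simp add: inj_on_def)
  ultimately show ?thesis by (simp add: card_image)
qed

definition coprime_pairs :: "nat \<Rightarrow> (nat \<times> nat) set" where
  "coprime_pairs N = {(b, d) \<in> {1..N} \<times> {1..N}. coprime b d}"

lemma coprime_pairs_subset: "coprime_pairs N \<subseteq> {1..N} \<times> {1..N}"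
  by (auto simp: coprime_pairs_def)

lemma card_non_coprime_pairs_le:
  "card ({1..N} \<times> {1..N} - coprime_pairs N) \<le> (\<Sum>k = 2..N. (N div k)^2)"
proof -
  define M where "M k = {x \<in> {1..N}. k dvd x}" for k
  have "{1..N} \<times> {1..N} - coprime_pairs N \<subseteq> (\<Union>k \<in> {2..N}. M k \<times> M k)"
  proof
    fix v assume v: "v \<in> {1..N} \<times> {1..N} - coprime_pairs N"
    obtain b d where "v = (b, d)" by (cases v)
    with v have bd: "v = (b, d)" "b \<in> {1..N}" "d \<in> {1..N}" "\<not> coprime b d"
      by (auto simp: coprime_pairs_def)
    define g where "g = gcd b d"
    have "g \<noteq> 1" "g \<noteq> 0"
      using bd by (auto simp: g_def coprime_iff_gcd_eq_1)
    moreover have "g \<le> N"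
      using bd order_trans[OF gcd_le1_nat[of b d]] by (auto simp: g_def)
    ultimately have "g \<in> {2..N}" by simp
    moreover have "(b, d) \<in> M g \<times> M g"
      using bd by (simp add: M_def g_def)
    ultimately show "v \<in> (\<Union>k \<in> {2..N}. M k \<times> M k)"
      using bd(1) by blast
  qed
  then have "card ({1..N} \<times> {1..N} - coprime_pairs N) \<le> card (\<Union>k \<in> {2..N}. M k \<times> M k)"
    by (rule card_mono[rotated]) (auto simp: M_def)
  also have "\<dots> \<le> (\<Sum>k = 2..N. card (M k \<times> M k))"
    by (rule card_UN_le) simp
  also have "\<dots> = (\<Sum>k = 2..N. (N div k)^2)"
  proof (rule sum.cong)
    fix k assume "k \<in> {2..N}"
    then have "card (M k) = N div k" unfolding M_def by (intro card_multiples_atLeastAtMost) simp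
    then show "card (M k \<times> M k) = (N div k)^2" by (simp add: card_cartesian_product power2_eq_square)
  qed simp
  finally show ?thesis .
qed

lemma card_coprime_pairs_ge:
  assumes "N \<ge> 1"
  shows "(real N)^2 / 3 \<le> real (card (coprime_pairs N))"
proof -
  have "real (card ({1..N} \<times> {1..N} - coprime_pairs N)) \<le> (\<Sum>k = 2..N. real ((N div k)^2))"
    using card_non_coprime_pairs_le[of N] by (simp only: of_nat_sum[symmetric] of_nat_le_iff)
  also have "\<dots> \<le> (\<Sum>k = 2..N. (real N)^2 * (1 / (real k)^2))"
  proof (rule sum_mono)
    fix k assume "k \<in> {2..N}"
    have "real (N div k) \<le> real N / real k" by (rule of_nat_div_le_of_nat)
    then have "(real (N div k))^2 \<le> (real N / real k)^2" by (intro power_mono) auto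
    then show "real ((N div k)^2) \<le> (real N)^2 * (1 / (real k)^2)" by (simp add: power_divide)
  qed
  also have "\<dots> \<le> (real N)^2 * (2/3)"
  proof -
    have "0 \<le> 2 / (2 * real N + 1)" by simp
    then have "(\<Sum>k = 2..N. 1 / (real k)^2) \<le> 2/3"
      using sum_inverse_squares_le[OF assms] by linarith
    then show ?thesis
      unfolding sum_distrib_left[symmetric] by (intro mult_left_mono) simp_all
  qed
  finally have "real (card ({1..N} \<times> {1..N} - coprime_pairs N)) \<le> (real N)^2 * (2/3)" .
  moreover have "card ({1..N} \<times> {1..N} - coprime_pairs N) = N*N - card (coprime_pairs N)"
    using finite_subset[OF coprime_pairs_subset] coprime_pairs_subset
    by (subst card_Diff_subset) auto
  moreover have "card (coprime_pairs N) \<le> N*N"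
    using card_mono[OF _ coprime_pairs_subset] by simp
  ultimately show ?thesis by (simp add: power2_eq_square)
qed

lemma coprime_pair_in_primitive_shell:
  assumes "(b, d) \<in> coprime_pairs N - {1..N div 2} \<times> {1..N div 2}"
  shows "(int b, int d) \<in> primitive_shell N"
proof -
  have "1 \<le> b" "b \<le> N" "1 \<le> d" "d \<le> N" "coprime b d" "N < 2 * max b d"
    using assms by (auto simp: coprime_pairs_def)
  then show ?thesis
    by (auto simp: primitive_shell_def max_def split: if_splits)
qed

lemma card_shell_generators_ge:
  assumes "N \<ge> 1"
  shows "(real N)^2 / 12 \<le> real (card (shell_generators N))"
proof -
  define S where "S = coprime_pairs N - {1..N div 2} \<times> {1..N div 2}"
  define f where "f v = transvection (int (fst v)) (int (snd v)) 8" for v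
  have "f ` S \<subseteq> shell_generators N"
  proof (rule image_subsetI)
    fix v assume "v \<in> S"
    then have "(int (fst v), int (snd v)) \<in> primitive_shell N"
      unfolding S_def by (intro coprime_pair_in_primitive_shell) simp
    then show "f v \<in> shell_generators N"
      unfolding f_def by (rule transvection_in_shell_generators) simp
  qed
  moreover have "inj_on f S"
  proof (rule inj_onI)
    fix v w assume "f v = f w"
    then have "int (fst v)^2 = int (fst w)^2" "int (snd v)^2 = int (snd w)^2"
      by (simp_all add: f_def transvection_def)
    then show "v = w" by (simp add: prod_eq_iff)
  qed
  ultimately have "card S \<le> card (shell_generators N)"
    using finite_primitive_shell card_inj_on_le[of f S] by (simp add: shell_generators_def)
  moreover have "card (coprime_pairs N) \<le> card S + (N div 2) * (N div 2)"
    unfolding S_def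
    using diff_card_le_card_Diff[of "{1..N div 2} \<times> {1..N div 2}" "coprime_pairs N"]
    by (simp add: le_diff_conv)
  then have "real (card (coprime_pairs N)) \<le> real (card S) + real (N div 2) * real (N div 2)"
    by (metis of_nat_add of_nat_le_iff of_nat_mult)
  moreover have "real (N div 2) * real (N div 2) \<le> (real N)^2 / 4"
  proof -
    have "real (N div 2) \<le> real N / 2" using of_nat_div_le_of_nat[of N 2] by simp
    then have "(real (N div 2))^2 \<le> (real N / 2)^2" by (intro power_mono) auto
    then show ?thesis by (simp add: power2_eq_square)
  qed
  ultimately show ?thesis
    using card_coprime_pairs_ge[OF assms] by linarith
qed

lemma floor_square_bounds:
  fixes R :: real
  assumes "R \<ge> 1"
  shows "nat \<lfloor>R\<rfloor> \<ge> 1" "(real (nat \<lfloor>R\<rfloor>))^2 \<le> R^2" "R^2 \<le> 4 * (real (nat \<lfloor>R\<rfloor>))^2"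
proof -
  show N: "nat \<lfloor>R\<rfloor> \<ge> 1" using assms by linarith
  have "real (nat \<lfloor>R\<rfloor>) \<le> R" "R \<le> 2 * real (nat \<lfloor>R\<rfloor>)" using assms N by linarith+
  then show "(real (nat \<lfloor>R\<rfloor>))^2 \<le> R^2" "R^2 \<le> 4 * (real (nat \<lfloor>R\<rfloor>))^2"
    using assms power_mono[of _ _ 2] by (force simp: power_mult_distrib)+
qed

theorem lemma2p17:
  "\<exists>C::real. C > 0 \<and>
    (\<forall>R::real. R \<ge> 1 \<longrightarrow>
      (\<exists>F Wp W.
         free_basis Wp \<and>
         F = generate SL2Z Wp \<and>
         subgroup F SL2Z \<and>
         F \<subseteq> generate SL2Z {mA, mB} \<and>
         W = Wp \<union> (\<lambda>w. inv\<^bsub>SL2Z\<^esub> w) ` Wp \<and>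
         finite W \<and>
         sigma ` W = W \<and> tau ` W = W \<and>
         (\<forall>w\<in>W. real_of_int (supnorm w) \<le> 18 * R\<^sup>2) \<and>
         real (card W) \<ge> C * R\<^sup>2 \<and>
         (\<forall>p::nat. prime p \<and> real p > 36 * R\<^sup>2 \<longrightarrow>
            (\<forall>w\<in>W. \<forall>w'\<in>W. w \<noteq> w' \<longrightarrow>
               (\<exists>i j. (w $ i $ j) mod int p \<noteq> (w' $ i $ j) mod int p)))))"
  apply (intro exI[of _ "1/48"] conjI allI impI)
   apply simp
  subgoal premises R_ge for R
  proof -
    define N where "N = nat \<lfloor>R\<rfloor>"
    have N: "N \<ge> 1" "(real N)^2 \<le> R^2" "R^2 \<le> 4 * (real N)^2"
      unfolding N_def using floor_square_bounds[OF R_ge] by simp_all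
    have bound: "\<forall>w\<in>shell_generators N. real_of_int (supnorm w) \<le> 18 * R^2"
    proof
      fix w assume "w \<in> shell_generators N"
      then have "real_of_int (supnorm w) \<le> real_of_int (9 * (int N)^2)"
        using supnorm_shell_generators_le[OF N(1)] by (simp only: of_int_le_iff)
      then have "real_of_int (supnorm w) \<le> 9 * (real N)^2" by simp
      then show "real_of_int (supnorm w) \<le> 18 * R^2" using N(2) zero_le_power2[of R] by linarith
    qed
    have card: "real (card (shell_generators N)) \<ge> 1/48 * R^2"
      using card_shell_generators_ge[OF N(1)] N(3) by simp
    have distinct: "\<forall>p::nat. prime p \<and> real p > 36 * R^2 \<longrightarrow>
        (\<forall>w\<in>shell_generators N. \<forall>w'\<in>shell_generators N. w \<noteq> w' \<longrightarrow>
           (\<exists>i j. (w $ i $ j) mod int p \<noteq> (w' $ i $ j) mod int p))"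
      using N(2) zero_le_power2[of R] by (auto intro!: shell_generators_distinct_mod[OF N(1)])
    show ?thesis
      by (rule exI[of _ "generate SL2Z (shell_basis N)"], rule exI[of _ "shell_basis N"],
          rule exI[of _ "shell_generators N"])
        (intro conjI refl bound card distinct free_basis_shell_basis shell_generators_eq
          finite_shell_generators sigma_shell_generators tau_shell_generators
          subgroup_generate_shell_basis generate_shell_basis_subset)
  qed
  done

end
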